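(* Let $\mathcal{F}=(\omega,\{\tau_j\}_{j\in[\pm n]})$ and $\mathcal{F}'=(\omega',\{\tau'_j\}_{j\in[\pm n]})$ be regular facets-pairing structures on $\mathcal{C}^n$, with associated tuples of signed permutations $(\omega;\widetilde\sigma_1,\widetilde\sigma_{-1},\dots,\widetilde\sigma_n,\widetilde\sigma_{-n})$ and $(\omega';\widetilde\sigma'_1,\widetilde\sigma'_{-1},\dots,\widetilde\sigma'_n,\widetilde\sigma'_{-n})$. Then $\mathcal{F}$ and $\mathcal{F}'$ are equivalent if and only if these tuples are shuffled-conjugate, i.e. there is a signed permutation $S$ of $[\pm n]$ with $\omega=S^{-1}\omega' S$ and $\widetilde\sigma_j=S^{-1}\widetilde\sigma'_{S(j)}S$ for all $j\in[\pm n]$.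
   Context: Let $[\pm n]=\{\pm1,\dots,\pm n\}$ and $\mathcal{C}^n=\{x\in\mathbb{R}^n: -\tfrac14\le x_i\le\tfrac14\}$. For $1\le i\le n$, $\mathbf{F}(i)$ and $\mathbf{F}(-i)$ denote the facets of $\mathcal{C}^n$ lying in $\{x_i=\tfrac14\}$ and $\{x_i=-\tfrac14\}$. For $j_1,\dots,j_s\in[\pm n]$ with pairwise distinct absolute values, $\mathbf{F}(j_1,\dots,j_s)=\mathbf{F}(j_1)\cap\dots\cap\mathbf{F}(j_s)$, a codimension-$s$ face; every proper face has this form. A signed permutation is a bijection $\sigma$ of $[\pm n]$ with $\sigma(-k)=-\sigma(k)$; symmetries $h$ of $\mathcal{C}^n$ correspond bijectively to signed permutations $\sigma$ via $h(\mathbf{F}(k))=\mathbf{F}(\sigma(k))$. A facets-pairing structure on $\mathcal{C}^n$ is a pair $(\omega,\{\tau_j\})$ where $\omega$ is a bijection of $[\pm n]$ with $\omega\circ\omega=\mathrm{id}$ and $\tau_j:\mathbf{F}(j)\to\mathbf{F}(\omega(j))$ ($j\in[\pm n]$) are face-preserving homeomorphisms with $\tau_{\omega(j)}=\tau_j^{-1}$, such that for all $j,k$ with $|j|\ne|k|$, writing $\tau_j(\mathbf{F}(j,k))=\mathbf{F}(\omega(j),k')$ and $\tau_k(\mathbf{F}(j,k))=\mathbf{F}(j',\omega(k))$, one has $\tau_{k'}(\tau_j(p))=\tau_{j'}(\tau_k(p))$ for all $p\in\mathbf{F}(j,k)$. It is regular if each $\tau_j$ is an isometry for the Euclidean metric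 and $\omega$ is a signed permutation. For a regular structure, define $\widetilde\sigma_j:[\pm n]\to[\pm n]$ by $\widetilde\sigma_j(\pm j)=\pm\omega(j)$ and, for $k\ne\pm j$, $\widetilde\sigma_j(k)$ is determined by $\tau_j(\mathbf{F}(j,k))=\mathbf{F}(\omega(j),\widetilde\sigma_j(k))$; each $\widetilde\sigma_j$ is a signed permutation. Two facets-pairing structures $(\omega,\{\tau_j\})$, $(\omega',\{\tau'_j\})$ are equivalent if there is a symmetry $h$ of $\mathcal{C}^n$ with $\tau_j=h^{-1}\circ\tau'_{j'}\circ h$ on $\mathbf{F}(j)$ for every $j$, where $\mathbf{F}(j')=h(\mathbf{F}(j))$. *)

theory Defs
  imports "HOL-Analysis.Analysis"
begin

text \<open>Points of R^n are functions nat => real, coordinates 1..n, all other coordinates 0.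
  Signed indices [+-n] are nonzero integers k with abs k <= n.\<close>

definition SI :: "nat \<Rightarrow> int set" where
  "SI n = {k. k \<noteq> 0 \<and> \<bar>k\<bar> \<le> int n}"

definition cube :: "nat \<Rightarrow> (nat \<Rightarrow> real) set" where
  "cube n = {x. (\<forall>i. 1 \<le> i \<and> i \<le> n \<longrightarrow> -1/4 \<le> x i \<and> x i \<le> 1/4)
                \<and> (\<forall>i. (i = 0 \<or> n < i) \<longrightarrow> x i = 0)}"

definition edist :: "nat \<Rightarrow> (nat \<Rightarrow> real) \<Rightarrow> (nat \<Rightarrow> real) \<Rightarrow> real" where
  "edist n x y = sqrt (\<Sum>i\<in>{1..n}. (x i - y i)^2)"

definition facet :: "nat \<Rightarrow> int \<Rightarrow> (nat \<Rightarrow> real) set" where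
  "facet n j = {x \<in> cube n. x (nat \<bar>j\<bar>) = of_int (sgn j) / 4}"

definition face2 :: "nat \<Rightarrow> int \<Rightarrow> int \<Rightarrow> (nat \<Rightarrow> real) set" where
  "face2 n j k = facet n j \<inter> facet n k"

definition faces :: "nat \<Rightarrow> (nat \<Rightarrow> real) set set" where
  "faces n = {G. \<exists>J. J \<subseteq> SI n \<and> J \<noteq> {} \<and> inj_on abs J \<and> G = \<Inter> (facet n ` J)}"

definition signed_perm :: "nat \<Rightarrow> (int \<Rightarrow> int) \<Rightarrow> bool" where
  "signed_perm n \<sigma> \<longleftrightarrow> bij_betw \<sigma> (SI n) (SI n) \<and> (\<forall>k\<in>SI n. \<sigma> (-k) = - \<sigma> k)"

definition face_preserving :: "nat \<Rightarrow> int \<Rightarrow> int \<Rightarrow> ((nat \<Rightarrow> real) \<Rightarrow> (nat \<Rightarrow> real)) \<Rightarrow> bool" where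
  "face_preserving n j j2 f \<longleftrightarrow>
     (\<forall>G\<in>faces n. G \<subseteq> facet n j \<longrightarrow> f ` G \<in> faces n \<and> f ` G \<subseteq> facet n j2)"

definition facets_pairing ::
  "nat \<Rightarrow> (int \<Rightarrow> int) \<Rightarrow> (int \<Rightarrow> (nat \<Rightarrow> real) \<Rightarrow> (nat \<Rightarrow> real)) \<Rightarrow> bool" where
  "facets_pairing n \<omega> \<tau> \<longleftrightarrow>
     (\<forall>j\<in>SI n. \<omega> j \<in> SI n \<and> \<omega> (\<omega> j) = j) \<and>
     (\<forall>j\<in>SI n. homeomorphism (facet n j) (facet n (\<omega> j)) (\<tau> j) (\<tau> (\<omega> j))
               \<and> face_preserving n j (\<omega> j) (\<tau> j)) \<and>
     (\<forall>j\<in>SI n. \<forall>k\<in>SI n. \<forall>j'\<in>SI n. \<forall>k'\<in>SI n.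
        \<bar>j\<bar> \<noteq> \<bar>k\<bar> \<and> \<tau> j ` face2 n j k = face2 n (\<omega> j) k'
        \<and> \<tau> k ` face2 n j k = face2 n j' (\<omega> k) \<longrightarrow>
        (\<forall>p\<in>face2 n j k. \<tau> k' (\<tau> j p) = \<tau> j' (\<tau> k p)))"

definition regular_fps ::
  "nat \<Rightarrow> (int \<Rightarrow> int) \<Rightarrow> (int \<Rightarrow> (nat \<Rightarrow> real) \<Rightarrow> (nat \<Rightarrow> real)) \<Rightarrow> bool" where
  "regular_fps n \<omega> \<tau> \<longleftrightarrow> facets_pairing n \<omega> \<tau> \<and> signed_perm n \<omega> \<and>
     (\<forall>j\<in>SI n. \<forall>x\<in>facet n j. \<forall>y\<in>facet n j. edist n (\<tau> j x) (\<tau> j y) = edist n x y)"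

definition sigt ::
  "nat \<Rightarrow> (int \<Rightarrow> int) \<Rightarrow> (int \<Rightarrow> (nat \<Rightarrow> real) \<Rightarrow> (nat \<Rightarrow> real)) \<Rightarrow> int \<Rightarrow> int \<Rightarrow> int" where
  "sigt n \<omega> \<tau> j k =
     (if k = j then \<omega> j else if k = - j then - \<omega> j
      else (THE k'. k' \<in> SI n \<and> \<bar>k'\<bar> \<noteq> \<bar>\<omega> j\<bar> \<and> \<tau> j ` face2 n j k = face2 n (\<omega> j) k'))"

definition cube_symmetry :: "nat \<Rightarrow> ((nat \<Rightarrow> real) \<Rightarrow> (nat \<Rightarrow> real)) \<Rightarrow> bool" where
  "cube_symmetry n h \<longleftrightarrow> h ` cube n = cube n \<and>
     (\<forall>x\<in>cube n. \<forall>y\<in>cube n. edist n (h x) (h y) = edist n x y)"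

definition fps_equivalent ::
  "nat \<Rightarrow> (int \<Rightarrow> int) \<Rightarrow> (int \<Rightarrow> (nat \<Rightarrow> real) \<Rightarrow> (nat \<Rightarrow> real))
       \<Rightarrow> (int \<Rightarrow> int) \<Rightarrow> (int \<Rightarrow> (nat \<Rightarrow> real) \<Rightarrow> (nat \<Rightarrow> real)) \<Rightarrow> bool" where
  "fps_equivalent n \<omega> \<tau> \<omega>' \<tau>' \<longleftrightarrow>
     (\<exists>h. cube_symmetry n h \<and>
        (\<forall>j\<in>SI n. \<forall>j'\<in>SI n. h ` facet n j = facet n j' \<longrightarrow>
           (\<forall>p\<in>facet n j. \<tau> j p = inv_into (cube n) h (\<tau>' j' (h p)))))"

end

theory Submission
  imports Defs
begin

text \<open>
  Geometrically, an isometry between two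
  faces of the cube (boxes obtained by fixing some coordinates to +-1/4) maps vertices to
  vertices and edges to edges; testing it on an edge shows that every free coordinate of the
  source is plus or minus a free coordinate of the image.  Consequently (i) every symmetry h of
  the cube permutes the facets by a signed permutation S, and conversely every signed
  permutation is induced by a signed coordinate permutation; (ii) the isometry tau j maps the
  ridge F(j,k) onto a ridge F(omega j, k'), which makes sigt well defined; (iii) an isometry of
  a facet is determined by the images of its ridges (rigidity).

  Combinatorially, equivalence via h means that h intertwines the gluing maps along S, i.e.
  h o tau j = tau' (S j) o h.  Reading this on facets and ridges gives the shuffled conjugacy of
  the tuples (omega; sigt); conversely, shuffled conjugacy says that both sides agree on all
  ridges of F(j), and rigidity turns this into equality of maps.
\<close>

subsection \<open>Squared distance and faces of the cube as boxes\<close>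

text \<open>Working with the squared distance avoids square roots; isometries for edist are the
  same as isometries for sqdist.\<close>

definition sqdist :: "nat \<Rightarrow> (nat \<Rightarrow> real) \<Rightarrow> (nat \<Rightarrow> real) \<Rightarrow> real" where
  "sqdist n x y = (\<Sum>i\<in>{1..n}. (x i - y i)^2)"

lemma edist_sqdist: "edist n x y = sqrt (sqdist n x y)"
  by (simp add: edist_def sqdist_def)

lemma edist_eq_iff: "edist n a b = edist n x y \<longleftrightarrow> sqdist n a b = sqdist n x y"
  by (simp add: edist_sqdist)

lemma sqdist_self[simp]: "sqdist n x x = 0" by (simp add: sqdist_def)

lemma corner_diff_sq: "(a::real) = 1/4 \<or> a = -1/4 \<Longrightarrow> b = 1/4 \<or> b = -1/4 \<Longrightarrow> (a - b)^2 = (if a = b then 0 else 1/4)"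
  by (elim disjE; hypsubst; simp add: power2_eq_square)

lemma corner_antipode_sq: "(a::real) = 1/4 \<or> a = -1/4 \<Longrightarrow> (a - - a)^2 = 1/4"
  by (elim disjE; hypsubst; simp add: power2_eq_square)

lemma cube_outside: "x \<in> cube n \<Longrightarrow> i = 0 \<or> n < i \<Longrightarrow> x i = 0"
  by (auto simp: cube_def)

lemma sqdist_eq_0: assumes "x \<in> cube n" "y \<in> cube n" "sqdist n x y = 0" shows "x = y"
proof
  fix i
  show "x i = y i"
  proof (cases "1 \<le> i \<and> i \<le> n")
    case True
    have "\<forall>i\<in>{1..n}. (x i - y i)^2 = 0"
      using assms(3) unfolding sqdist_def by (subst (asm) sum_nonneg_eq_0_iff) auto
    then show ?thesis using True by auto
  next
    case False
    hence "i = 0 \<or> n < i" by auto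
    then show ?thesis using assms(1,2) cube_outside by metis
  qed
qed

lemma isometry_inj:
  assumes iso: "\<forall>x\<in>A. \<forall>y\<in>A. sqdist n (h x) (h y) = sqdist n x y" and A: "A \<subseteq> cube n"
  shows "inj_on h A"
proof (rule inj_onI)
  fix x y assume x: "x \<in> A" and y: "y \<in> A" and e: "h x = h y"
  have "sqdist n x y = 0" using iso x y e by (metis sqdist_self)
  thus "x = y" using sqdist_eq_0 x y A by blast
qed

text \<open>The box with the coordinates in F fixed to the values of c; the cube, its facets and its
  ridges are boxes.  Its vertices have all free coordinates equal to +-1/4.\<close>

definition box :: "nat \<Rightarrow> nat set \<Rightarrow> (nat \<Rightarrow> real) \<Rightarrow> (nat \<Rightarrow> real) set" where
  "box n F c = {x \<in> cube n. \<forall>i\<in>F. x i = c i}"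

definition box_vertex :: "nat \<Rightarrow> nat set \<Rightarrow> (nat \<Rightarrow> real) \<Rightarrow> (nat \<Rightarrow> real) \<Rightarrow> bool" where
  "box_vertex n F c v \<longleftrightarrow> v \<in> box n F c \<and> (\<forall>i\<in>{1..n}-F. v i = 1/4 \<or> v i = -1/4)"

lemma sqdist_box: assumes "x \<in> box n F c" "y \<in> box n F c"
  shows "sqdist n x y = (\<Sum>i\<in>{1..n}-F. (x i - y i)^2)"
  unfolding sqdist_def
  by (rule sum.mono_neutral_right) (use assms in \<open>auto simp: box_def\<close>)

text \<open>Each free coordinate contributes at most 1/4, with equality only at +-1/4, so the diameter
  of a box is attained exactly at pairs of opposite vertices.\<close>

lemma coord_diff_sq_le: assumes "x \<in> cube n" "y \<in> cube n" "i \<in> {1..n}" shows "(x i - y i)^2 \<le> 1/4"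
proof -
  have "-1/4 \<le> x i" "x i \<le> 1/4" "-1/4 \<le> y i" "y i \<le> 1/4" using assms by (auto simp: cube_def)
  hence "\<bar>x i - y i\<bar> \<le> 1/2" unfolding abs_le_iff by linarith
  hence "\<bar>x i - y i\<bar>^2 \<le> (1/2)^2" by (intro power_mono) auto
  thus ?thesis by (simp add: power2_abs power_divide)
qed

lemma coord_diff_sq_less: assumes "x \<in> cube n" "y \<in> cube n" "i \<in> {1..n}" "\<not> (x i = 1/4 \<or> x i = -1/4)"
  shows "(x i - y i)^2 < 1/4"
proof -
  have "-1/4 < x i" "x i < 1/4" "-1/4 \<le> y i" "y i \<le> 1/4" using assms by (auto simp: cube_def)
  hence "\<bar>x i - y i\<bar> < 1/2" unfolding abs_less_iff by linarith
  hence "\<bar>x i - y i\<bar>^2 < (1/2)^2" by (intro power_strict_mono) auto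
  thus ?thesis by (simp add: power2_abs power_divide)
qed

lemma box_diameter_vertex: assumes "x \<in> box n F c" "y \<in> box n F c" "sqdist n x y = card ({1..n}-F) / 4"
  shows "box_vertex n F c x"
proof -
  have xc: "x \<in> cube n" "y \<in> cube n" using assms by (auto simp: box_def)
  have "\<forall>i\<in>{1..n}-F. x i = 1/4 \<or> x i = -1/4"
  proof (rule ballI, rule ccontr)
    fix i assume i: "i \<in> {1..n}-F" and ne: "\<not> (x i = 1/4 \<or> x i = -1/4)"
    have lt: "(x i - y i)^2 < 1/4" using coord_diff_sq_less[OF xc _ ne] i by auto
    have "sqdist n x y < (\<Sum>i\<in>{1..n}-F. 1/4)"
      unfolding sqdist_box[OF assms(1,2)]
      by (rule sum_strict_mono_ex1) (use i lt coord_diff_sq_le xc in auto)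
    thus False using assms(3) by simp
  qed
  thus ?thesis using assms(1) by (simp add: box_vertex_def)
qed

lemma box_vertex_antipode: assumes v: "box_vertex n F c v" shows "\<exists>w\<in>box n F c. sqdist n v w = card ({1..n}-F) / 4"
proof -
  define w where "w = (\<lambda>i. if i \<in> {1..n}-F then - v i else v i)"
  have vb: "v \<in> box n F c" using v by (simp add: box_vertex_def)
  have wb: "w \<in> box n F c" using v unfolding box_vertex_def box_def cube_def w_def
    by auto
  have "sqdist n v w = (\<Sum>i\<in>{1..n}-F. (v i - w i)^2)" by (rule sqdist_box[OF vb wb])
  also have "\<dots> = (\<Sum>i\<in>{1..n}-F. 1/4)"
  proof (intro sum.cong refl)
    fix i assume i: "i \<in> {1..n}-F"
    hence vi: "v i = 1/4 \<or> v i = -1/4" using v by (auto simp: box_vertex_def)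
    have "w i = - v i" using i by (simp add: w_def)
    thus "(v i - w i)^2 = 1/4" using corner_antipode_sq[OF vi] by simp
  qed
  also have "\<dots> = card ({1..n}-F)/4" by simp
  finally show ?thesis using wb by blast
qed

text \<open>An isometry between boxes of the same dimension maps vertices to vertices, since a
  vertex is a point having a partner at maximal distance.\<close>

lemma box_isometry_vertex:
  assumes card: "card ({1..n}-F') = card ({1..n}-F)"
    and into: "\<forall>x\<in>box n F c. f x \<in> box n F' c'"
    and iso: "\<forall>x\<in>box n F c. \<forall>y\<in>box n F c. sqdist n (f x) (f y) = sqdist n x y"
    and v: "box_vertex n F c v"
  shows "box_vertex n F' c' (f v)"
proof -
  obtain w where w: "w \<in> box n F c" "sqdist n v w = card ({1..n}-F)/4" using box_vertex_antipode[OF v] by blast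
  have vb: "v \<in> box n F c" using v by (simp add: box_vertex_def)
  have "sqdist n (f v) (f w) = card ({1..n}-F')/4" using iso vb w card by simp
  then show ?thesis using box_diameter_vertex into vb w by blast
qed

lemma sqdist_flip: assumes "i \<in> {1..n}" "\<forall>l\<in>{1..n}. l \<noteq> i \<longrightarrow> v' l = v l" "v' i = - v i"
  shows "sqdist n x v' - sqdist n x v = 4 * v i * x i"
proof -
  have "sqdist n x v' = (x i - v' i)^2 + (\<Sum>l\<in>{1..n}-{i}. (x l - v' l)^2)"
    unfolding sqdist_def using assms(1) by (subst sum.remove) auto
  moreover have "sqdist n x v = (x i - v i)^2 + (\<Sum>l\<in>{1..n}-{i}. (x l - v l)^2)"
    unfolding sqdist_def using assms(1) by (subst sum.remove) auto
  moreover have "(\<Sum>l\<in>{1..n}-{i}. (x l - v' l)^2) = (\<Sum>l\<in>{1..n}-{i}. (x l - v l)^2)"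
    using assms(2) by (intro sum.cong) auto
  ultimately show ?thesis using assms(3) by (simp add: power2_eq_square algebra_simps)
qed

lemma box_vertex_adjacent: assumes v: "box_vertex n F c v" and w: "box_vertex n F c w" and vw: "sqdist n v w = 1/4"
  shows "\<exists>i\<in>{1..n}-F. w i = - v i \<and> (\<forall>l\<in>{1..n}. l \<noteq> i \<longrightarrow> w l = v l)"
proof -
  let ?Fr = "{1..n}-F"
  define D where "D = {l\<in>?Fr. v l \<noteq> w l}"
  have vb: "v \<in> box n F c" "w \<in> box n F c" using v w by (auto simp: box_vertex_def)
  have tm: "(v l - w l)^2 = (if l \<in> D then 1/4 else 0)" if l: "l \<in> ?Fr" for l
  proof -
    have a: "v l = 1/4 \<or> v l = -1/4" and b: "w l = 1/4 \<or> w l = -1/4" using v w l by (auto simp: box_vertex_def)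
    have "l \<in> D \<longleftrightarrow> v l \<noteq> w l" using l by (simp add: D_def)
    thus ?thesis using corner_diff_sq[OF a b] by simp
  qed
  have "sqdist n v w = (\<Sum>l\<in>?Fr. (v l - w l)^2)" by (rule sqdist_box[OF vb])
  also have "\<dots> = (\<Sum>l\<in>?Fr. (if l \<in> D then 1/4 else 0))"
    by (rule sum.cong[OF refl]) (rule tm)
  also have "\<dots> = (\<Sum>l\<in>?Fr \<inter> D. 1/4)" by (rule sum.inter_restrict[symmetric]) simp
  also have "?Fr \<inter> D = D" unfolding D_def by blast
  finally have "real (card D) / 4 = 1/4" using vw by simp
  hence "card D = 1" by simp
  then obtain i where Di: "D = {i}" by (rule card_1_singletonE)
  have iF: "i \<in> ?Fr" "v i \<noteq> w i" using Di unfolding D_def by blast+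
  have a: "v i = 1/4 \<or> v i = -1/4" and b: "w i = 1/4 \<or> w i = -1/4"
    using v w iF(1) unfolding box_vertex_def by blast+
  have "w i = - v i" using a b iF(2) by linarith
  moreover have "\<forall>l\<in>{1..n}. l \<noteq> i \<longrightarrow> w l = v l"
  proof (intro ballI impI)
    fix l assume l: "l \<in> {1..n}" "l \<noteq> i"
    show "w l = v l"
    proof (cases "l \<in> F")
      case True thus ?thesis using vb unfolding box_def by simp
    next
      case False
      hence "l \<notin> D" using l Di by blast
      thus ?thesis using l False unfolding D_def by auto
    qed
  qed
  ultimately show ?thesis using iF by blast
qed

text \<open>Proof: an edge in direction i is mapped to an edge in some direction i', and the linear
  dependence of distances on the flipped coordinate (sqdist_flip) transfers along f.\<close>

lemma box_isometry_coordinate: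
  assumes Fs: "F \<subseteq> {1..n}" and cs: "\<forall>i\<in>F. c i = 1/4 \<or> c i = -1/4"
    and card: "card ({1..n}-F') = card ({1..n}-F)"
    and into: "\<forall>x\<in>box n F c. f x \<in> box n F' c'"
    and iso: "\<forall>x\<in>box n F c. \<forall>y\<in>box n F c. sqdist n (f x) (f y) = sqdist n x y"
    and i: "i \<in> {1..n}-F"
  shows "\<exists>i'\<in>{1..n}-F'. \<exists>t\<in>{1,-1::int}. \<forall>x\<in>box n F c. x i = of_int t * f x i'"
proof -
  define v where "v = (\<lambda>l. if l \<in> {1..n} then (if l \<in> F then c l else 1/4) else (0::real))"
  define w where "w = v(i := -1/4)"
  have vi: "v i = 1/4" using i by (simp add: v_def)
  have vP: "box_vertex n F c v" using Fs cs unfolding box_vertex_def box_def cube_def v_def by force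
  have wP: "box_vertex n F c w" using Fs cs i unfolding box_vertex_def box_def cube_def w_def v_def by force
  have wv1: "\<forall>l\<in>{1..n}. l \<noteq> i \<longrightarrow> w l = v l" and wv2: "w i = - v i" using vi by (auto simp: w_def)
  have iN: "i \<in> {1..n}" using i by auto
  have "sqdist n v w - sqdist n v v = 4 * v i * v i" by (rule sqdist_flip[OF iN wv1 wv2])
  hence vw: "sqdist n v w = 1/4" using vi by simp
  have vb: "v \<in> box n F c" and wb: "w \<in> box n F c" using vP wP by (auto simp: box_vertex_def)
  have fv: "box_vertex n F' c' (f v)" by (rule box_isometry_vertex[OF card into iso vP])
  have fw: "box_vertex n F' c' (f w)" by (rule box_isometry_vertex[OF card into iso wP])
  have "sqdist n (f v) (f w) = 1/4" using iso vb wb vw by simp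
  then obtain i' where i': "i' \<in> {1..n}-F'" "f w i' = - f v i'" "\<forall>l\<in>{1..n}. l \<noteq> i' \<longrightarrow> f w l = f v l"
    using box_vertex_adjacent[OF fv fw] by blast
  have fvi: "f v i' = 1/4 \<or> f v i' = -1/4" using fv i' by (auto simp: box_vertex_def)
  define t :: int where "t = (if f v i' = 1/4 then 1 else -1)"
  have t: "t \<in> {1,-1}" "4 * f v i' = of_int t" using fvi by (auto simp: t_def)
  have "\<forall>x\<in>box n F c. x i = of_int t * f x i'"
  proof
    fix x assume x: "x \<in> box n F c"
    have "sqdist n x w - sqdist n x v = 4 * v i * x i" by (rule sqdist_flip[OF iN wv1 wv2])
    moreover have "sqdist n (f x) (f w) - sqdist n (f x) (f v) = 4 * f v i' * f x i'"
      using i' by (intro sqdist_flip) auto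
    moreover have "sqdist n (f x) (f w) = sqdist n x w" "sqdist n (f x) (f v) = sqdist n x v" using iso x vb wb by auto
    ultimately show "x i = of_int t * f x i'" using vi t(2) by simp
  qed
  thus ?thesis using i' t by blast
qed

lemma SI_neg: "k \<in> SI n \<Longrightarrow> -k \<in> SI n" by (simp add: SI_def)
lemma SI_nat: "k \<in> SI n \<Longrightarrow> nat \<bar>k\<bar> \<in> {1..n}" by (auto simp: SI_def)
lemma SI_sgn: "k \<in> SI n \<Longrightarrow> sgn k = 1 \<or> sgn k = -1" by (auto simp: SI_def sgn_if)
lemma SI_sgn_real: "k \<in> SI n \<Longrightarrow> (of_int (sgn k)::real) = 1 \<or> (of_int (sgn k)::real) = -1"
  using SI_sgn[of k n] by auto
lemma SI_mk: "i \<in> {1..n} \<Longrightarrow> t \<in> {1,-1::int} \<Longrightarrow> t * int i \<in> SI n \<and> nat \<bar>t * int i\<bar> = i \<and> sgn (t * int i) = t"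
  by (auto simp: SI_def abs_mult sgn_mult)
lemma finite_SI: "finite (SI n)"
  by (rule finite_subset[of _ "{-int n..int n}"]) (auto simp: SI_def)

lemma SI_int: "i \<in> {1..n} \<Longrightarrow> int i \<in> SI n" by (auto simp: SI_def)

lemma nat_abs_eq: "nat \<bar>a::int\<bar> = nat \<bar>b\<bar> \<longleftrightarrow> \<bar>a\<bar> = \<bar>b\<bar>" by auto

lemma sgn_quarter: "k \<in> SI n \<Longrightarrow> (of_int (sgn k)/4::real) = 1/4 \<or> (of_int (sgn k)/4::real) = -1/4"
  using SI_sgn[of k n] by auto

lemma sgn_quarter_nonzero: "k \<in> SI n \<Longrightarrow> (of_int (sgn k)/4::real) \<noteq> 0"
  using SI_sgn[of k n] by auto

lemma cube_as_box: "cube n = box n {} c" by (simp add: box_def)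
lemma facet_as_box: "facet n a = box n {nat \<bar>a\<bar>} (\<lambda>_. of_int (sgn a) / 4)" by (auto simp: facet_def box_def)
lemma facet_subset_cube: "facet n a \<subseteq> cube n" by (auto simp: facet_def)
lemma card_facet_free: "a \<in> SI n \<Longrightarrow> card ({1..n} - {nat \<bar>a\<bar>}) = n - 1"
  using SI_nat[of a n] by (simp add: card_Diff_singleton)

lemma cube_isometry_coordinate:
  assumes into: "\<forall>x\<in>cube n. f x \<in> cube n" and iso: "\<forall>x\<in>cube n. \<forall>y\<in>cube n. sqdist n (f x) (f y) = sqdist n x y"
    and i: "i \<in> {1..n}"
  shows "\<exists>i'\<in>{1..n}. \<exists>t\<in>{1,-1::int}. \<forall>x\<in>cube n. x i = of_int t * f x i'"
proof -
  have "\<exists>i'\<in>{1..n}-{}. \<exists>t\<in>{1,-1::int}. \<forall>x\<in>box n {} (\<lambda>_. 0). x i = of_int t * f x i'"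
    by (rule box_isometry_coordinate[where F'="{}" and c'="\<lambda>_. 0"]) (use into iso i in \<open>simp_all add: cube_as_box[symmetric]\<close>)
  thus ?thesis by (simp add: cube_as_box[symmetric])
qed

lemma facet_isometry_coordinate:
  assumes a: "a \<in> SI n" and b: "b \<in> SI n"
    and into: "\<forall>x\<in>facet n a. f x \<in> facet n b"
    and iso: "\<forall>x\<in>facet n a. \<forall>y\<in>facet n a. sqdist n (f x) (f y) = sqdist n x y"
    and i: "i \<in> {1..n}" "i \<noteq> nat \<bar>a\<bar>"
  shows "\<exists>i'\<in>{1..n}. i' \<noteq> nat \<bar>b\<bar> \<and> (\<exists>t\<in>{1,-1::int}. \<forall>x\<in>facet n a. x i = of_int t * f x i')"
proof -
  have cs: "\<forall>i\<in>{nat \<bar>a\<bar>}. (\<lambda>_. of_int (sgn a) / 4) i = (1/4::real) \<or> (\<lambda>_. of_int (sgn a) / 4) i = (-1/4::real)"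
    using SI_sgn_real[OF a] by auto
  have "\<exists>i'\<in>{1..n}-{nat \<bar>b\<bar>}. \<exists>t\<in>{1,-1::int}. \<forall>x\<in>box n {nat \<bar>a\<bar>} (\<lambda>_. of_int (sgn a)/4). x i = of_int t * f x i'"
    by (rule box_isometry_coordinate[OF _ cs, where F'="{nat \<bar>b\<bar>}" and c'="\<lambda>_. of_int (sgn b) / 4"]) (use into iso i SI_nat[OF a] card_facet_free[OF a] card_facet_free[OF b] in \<open>simp_all add: facet_as_box[symmetric]\<close>)
  then obtain i' t where r: "i' \<in> {1..n}-{nat \<bar>b\<bar>}" "t \<in> {1,-1::int}"
    "\<forall>x\<in>box n {nat \<bar>a\<bar>} (\<lambda>_. of_int (sgn a)/4). x i = of_int t * f x i'" by blast
  have "\<forall>x\<in>facet n a. x i = of_int t * f x i'" using r(3) facet_as_box[of n a] by simp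
  thus ?thesis using r(1,2) by blast
qed

lemma sign_coord_arith: "(s::int) = 1 \<or> s = -1 \<Longrightarrow> (t::int) = 1 \<or> t = -1 \<Longrightarrow> (a::real) = of_int t * b \<Longrightarrow>
  (a = of_int s / 4 \<longleftrightarrow> b = of_int (s * t) / 4) \<and> (a = of_int (-s) / 4 \<longleftrightarrow> b = of_int (-(s * t)) / 4)"
  by (elim disjE) auto

lemma coord_relation_facet:
  assumes t: "t \<in> {1,-1::int}" and k: "k \<in> SI n" and i': "i' \<in> {1..n}"
    and rel: "x (nat \<bar>k\<bar>) = of_int t * y i'" and x: "x \<in> cube n" and y: "y \<in> cube n"
  shows "(x \<in> facet n k \<longleftrightarrow> y \<in> facet n (sgn k * t * int i')) \<and>
         (x \<in> facet n (-k) \<longleftrightarrow> y \<in> facet n (-(sgn k * t * int i')))"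
proof -
  have s: "sgn k = 1 \<or> sgn k = -1" using SI_sgn[OF k] .
  have t': "t = 1 \<or> t = -1" using t by auto
  have nk: "nat \<bar>-k\<bar> = nat \<bar>k\<bar>" "sgn (-k) = - sgn k" by (auto simp: sgn_minus)
  define k' where "k' = sgn k * t * int i'"
  have st: "sgn k * t \<in> {1,-1}" using s t by auto
  have k'p: "nat \<bar>k'\<bar> = i'" "sgn k' = sgn k * t" using SI_mk[OF i' st] by (auto simp: k'_def)
  have k'n: "nat \<bar>-k'\<bar> = i'" "sgn (-k') = - (sgn k * t)" using k'p by (auto simp: sgn_minus)
  have "(x \<in> facet n k \<longleftrightarrow> y \<in> facet n k') \<and> (x \<in> facet n (-k) \<longleftrightarrow> y \<in> facet n (-k'))"
    unfolding facet_def using x y nk k'p k'n sign_coord_arith[OF s t' rel] by simp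
  thus ?thesis unfolding k'_def .
qed

lemma image_restrict: "f ` P = Q \<Longrightarrow> \<forall>x\<in>P. (x \<in> A \<longleftrightarrow> f x \<in> B) \<Longrightarrow> f ` (P \<inter> A) = Q \<inter> B" by blast

text \<open>Points with coordinates in {0, +-1/4} serve as witnesses separating facets and ridges.\<close>

lemma corner_in_cube:
  assumes "\<And>l. x l = 0 \<or> x l = 1/4 \<or> x l = -1/4" "\<And>l. l = 0 \<or> n < l \<Longrightarrow> x l = 0"
  shows "x \<in> cube n"
  unfolding cube_def
proof (intro CollectI conjI allI impI)
  fix i
  have "x i = 0 \<or> x i = 1/4 \<or> x i = -1/4" by (rule assms(1))
  thus "-1/4 \<le> x i" "x i \<le> 1/4" by auto
next
  fix i assume "i = 0 \<or> n < i" thus "x i = 0" by (rule assms(2))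
qed

lemma facet_inj: assumes a: "a \<in> SI n" and b: "b \<in> SI n" and e: "facet n a = facet n b" shows "a = b"
proof -
  define x where "x = (\<lambda>l. if l = nat \<bar>a\<bar> then of_int (sgn a) / 4 else (0::real))"
  have "x \<in> cube n"
  proof (rule corner_in_cube)
    fix l show "x l = 0 \<or> x l = 1/4 \<or> x l = -1/4" using sgn_quarter[OF a] by (simp add: x_def)
  next
    fix l assume "l = 0 \<or> n < l" thus "x l = 0" using SI_nat[OF a] by (auto simp: x_def)
  qed
  hence "x \<in> facet n a" by (simp add: facet_def x_def)
  hence "x \<in> facet n b" using e by simp
  hence xb: "x (nat \<bar>b\<bar>) = of_int (sgn b)/4" by (simp add: facet_def)
  have eq: "nat \<bar>b\<bar> = nat \<bar>a\<bar>"
  proof (rule ccontr)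
    assume "nat \<bar>b\<bar> \<noteq> nat \<bar>a\<bar>"
    hence "x (nat \<bar>b\<bar>) = 0" by (simp add: x_def)
    thus False using xb sgn_quarter_nonzero[OF b] by simp
  qed
  have "(of_int (sgn b)::real) / 4 = of_int (sgn a) / 4" using xb eq by (simp add: x_def)
  hence "sgn b = sgn a" by simp
  moreover have "\<bar>b\<bar> = \<bar>a\<bar>" using eq by (simp add: nat_abs_eq)
  ultimately show "a = b" by (metis sgn_mult_abs)
qed

lemma face2_inj:
  assumes b: "b \<in> SI n" and k1: "k1 \<in> SI n" and k2: "k2 \<in> SI n"
    and a1: "\<bar>k1\<bar> \<noteq> \<bar>b\<bar>" and a2: "\<bar>k2\<bar> \<noteq> \<bar>b\<bar>" and e: "face2 n b k1 = face2 n b k2"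
  shows "k1 = k2"
proof -
  define x where "x = (\<lambda>l. if l = nat \<bar>b\<bar> then of_int (sgn b) / 4
      else if l = nat \<bar>k1\<bar> then of_int (sgn k1) / 4 else (0::real))"
  have ne: "nat \<bar>k1\<bar> \<noteq> nat \<bar>b\<bar>" using a1 by (simp add: nat_abs_eq)
  have "x \<in> cube n"
  proof (rule corner_in_cube)
    fix l show "x l = 0 \<or> x l = 1/4 \<or> x l = -1/4" using sgn_quarter[OF b] sgn_quarter[OF k1] by (simp add: x_def)
  next
    fix l assume "l = 0 \<or> n < l" thus "x l = 0" using SI_nat[OF b] SI_nat[OF k1] by (auto simp: x_def)
  qed
  hence "x \<in> face2 n b k1" using ne by (simp add: face2_def facet_def x_def)
  hence "x \<in> facet n k2" using e unfolding face2_def by blast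
  hence xb: "x (nat \<bar>k2\<bar>) = of_int (sgn k2)/4" by (simp add: facet_def)
  have ne2: "nat \<bar>k2\<bar> \<noteq> nat \<bar>b\<bar>" using a2 by (simp add: nat_abs_eq)
  have eq: "nat \<bar>k2\<bar> = nat \<bar>k1\<bar>"
  proof (rule ccontr)
    assume "nat \<bar>k2\<bar> \<noteq> nat \<bar>k1\<bar>"
    hence "x (nat \<bar>k2\<bar>) = 0" using ne2 by (simp add: x_def)
    thus False using xb sgn_quarter_nonzero[OF k2] by simp
  qed
  have "(of_int (sgn k2)::real) / 4 = of_int (sgn k1) / 4" using xb eq ne by (simp add: x_def)
  hence "sgn k2 = sgn k1" by simp
  moreover have "\<bar>k2\<bar> = \<bar>k1\<bar>" using eq by (simp add: nat_abs_eq)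
  ultimately show "k1 = k2" by (metis sgn_mult_abs)
qed

lemma image_face2: "inj_on h (cube n) \<Longrightarrow> h ` facet n a = facet n a' \<Longrightarrow> h ` facet n c = facet n c'
   \<Longrightarrow> h ` face2 n a c = face2 n a' c'"
  unfolding face2_def by (simp add: inj_on_image_Int facet_subset_cube)

subsection \<open>Regular structures and the signed permutations sigt\<close>

lemma regular_facts:
  assumes reg: "regular_fps n \<omega> \<tau>" and j: "j \<in> SI n"
  shows "\<omega> j \<in> SI n" "\<tau> j ` facet n j = facet n (\<omega> j)"
    "\<forall>x\<in>facet n j. \<forall>y\<in>facet n j. sqdist n (\<tau> j x) (\<tau> j y) = sqdist n x y"
    "\<forall>x\<in>facet n j. \<tau> j x \<in> facet n (\<omega> j)"
proof -
  show o: "\<omega> j \<in> SI n" using reg j unfolding regular_fps_def facets_pairing_def by blast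
  have "homeomorphism (facet n j) (facet n (\<omega> j)) (\<tau> j) (\<tau> (\<omega> j))"
    using reg j unfolding regular_fps_def facets_pairing_def by blast
  thus im: "\<tau> j ` facet n j = facet n (\<omega> j)" unfolding homeomorphism_def by blast
  show "\<forall>x\<in>facet n j. \<forall>y\<in>facet n j. sqdist n (\<tau> j x) (\<tau> j y) = sqdist n x y"
    using reg j unfolding regular_fps_def edist_eq_iff by blast
  show "\<forall>x\<in>facet n j. \<tau> j x \<in> facet n (\<omega> j)" using im by blast
qed

text \<open>For |k| /= |j| the description of sigt by a definite choice is justified: tau j maps
  the ridge F(j,k) onto a ridge F(omega j, k') and k' is unique.\<close>

lemma sigt_char:
  assumes reg: "regular_fps n \<omega> \<tau>" and j: "j \<in> SI n" and k: "k \<in> SI n" and jk: "\<bar>k\<bar> \<noteq> \<bar>j\<bar>"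
  shows "sigt n \<omega> \<tau> j k \<in> SI n \<and> \<bar>sigt n \<omega> \<tau> j k\<bar> \<noteq> \<bar>\<omega> j\<bar> \<and>
         \<tau> j ` face2 n j k = face2 n (\<omega> j) (sigt n \<omega> \<tau> j k)"
proof -
  note R = regular_facts[OF reg j]
  have kj: "k \<noteq> j" "k \<noteq> -j" using jk by auto
  have i: "nat \<bar>k\<bar> \<in> {1..n}" "nat \<bar>k\<bar> \<noteq> nat \<bar>j\<bar>" using SI_nat[OF k] jk by (auto simp: nat_abs_eq)
  obtain i' t where i': "i' \<in> {1..n}" "i' \<noteq> nat \<bar>\<omega> j\<bar>" and t: "t \<in> {1,-1::int}"
      and rel: "\<forall>x\<in>facet n j. x (nat \<bar>k\<bar>) = of_int t * \<tau> j x i'"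
    using facet_isometry_coordinate[OF j R(1) R(4) R(3) i] by blast
  define k' where "k' = sgn k * t * int i'"
  have st: "sgn k * t \<in> {1,-1}" using SI_sgn[OF k] t by auto
  have k'SI: "k' \<in> SI n" and nk': "nat \<bar>k'\<bar> = i'" using SI_mk[OF i'(1) st] by (auto simp: k'_def)
  have k'abs: "\<bar>k'\<bar> \<noteq> \<bar>\<omega> j\<bar>" using nk' i'(2) by (auto simp: nat_abs_eq[symmetric])
  have "\<forall>x\<in>facet n j. (x \<in> facet n k \<longleftrightarrow> \<tau> j x \<in> facet n k')"
  proof
    fix x assume x: "x \<in> facet n j"
    show "x \<in> facet n k \<longleftrightarrow> \<tau> j x \<in> facet n k'"
      using coord_relation_facet[OF t k i'(1) _ _ _, of x "\<tau> j x"] rel x facet_subset_cube R(4) unfolding k'_def by blast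
  qed
  hence img: "\<tau> j ` face2 n j k = face2 n (\<omega> j) k'"
    unfolding face2_def by (rule image_restrict[OF R(2)])
  have uniq: "k'' = k'" if "k'' \<in> SI n \<and> \<bar>k''\<bar> \<noteq> \<bar>\<omega> j\<bar> \<and> \<tau> j ` face2 n j k = face2 n (\<omega> j) k''" for k''
    using face2_inj[OF R(1) _ k'SI _ k'abs] that img by metis
  have "(THE k'. k' \<in> SI n \<and> \<bar>k'\<bar> \<noteq> \<bar>\<omega> j\<bar> \<and> \<tau> j ` face2 n j k = face2 n (\<omega> j) k') = k'"
    by (rule the_equality) (use k'SI k'abs img uniq in blast)+
  hence "sigt n \<omega> \<tau> j k = k'" unfolding sigt_def using kj by simp
  thus ?thesis using k'SI k'abs img by simp
qed

subsection \<open>Signed permutations\<close>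

lemma sperm_facts:
  assumes sp: "signed_perm n S"
  shows sperm_inj: "inj_on S (SI n)"
    and sperm_in: "\<And>k. k \<in> SI n \<Longrightarrow> S k \<in> SI n" and sperm_neg: "\<And>k. k \<in> SI n \<Longrightarrow> S (-k) = - S k"
    and sperm_inv_left: "\<And>k. k \<in> SI n \<Longrightarrow> inv_into (SI n) S (S k) = k"
    and sperm_inv_right: "\<And>k. k \<in> SI n \<Longrightarrow> S (inv_into (SI n) S k) = k"
    and sperm_inv_in: "\<And>k. k \<in> SI n \<Longrightarrow> inv_into (SI n) S k \<in> SI n"
proof -
  have b: "bij_betw S (SI n) (SI n)" and ng: "\<forall>k\<in>SI n. S (-k) = - S k"
    using sp by (auto simp: signed_perm_def)
  show i: "inj_on S (SI n)" using b by (simp add: bij_betw_def)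
  have im: "S ` SI n = SI n" using b by (simp add: bij_betw_def)
  show "\<And>k. k \<in> SI n \<Longrightarrow> S k \<in> SI n" using im by blast
  show "\<And>k. k \<in> SI n \<Longrightarrow> S (-k) = - S k" using ng by blast
  show "\<And>k. k \<in> SI n \<Longrightarrow> inv_into (SI n) S (S k) = k" using i by (simp add: inv_into_f_f)
  show "\<And>k. k \<in> SI n \<Longrightarrow> S (inv_into (SI n) S k) = k" using im by (simp add: f_inv_into_f)
  show "\<And>k. k \<in> SI n \<Longrightarrow> inv_into (SI n) S k \<in> SI n" using im by (metis inv_into_into)
qed

lemma sperm_abs_eq: assumes sp: "signed_perm n S" and a: "a \<in> SI n" and b: "b \<in> SI n"
  shows "\<bar>S a\<bar> = \<bar>S b\<bar> \<longleftrightarrow> \<bar>a\<bar> = \<bar>b\<bar>"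
proof -
  have e1: "S a = S b \<longleftrightarrow> a = b" using inj_on_eq_iff[OF sperm_inj[OF sp] a b] .
  have e2: "S a = - S b \<longleftrightarrow> a = - b"
    using inj_on_eq_iff[OF sperm_inj[OF sp] a SI_neg[OF b]] sperm_neg[OF sp b] by simp
  show ?thesis using e1 e2 by (auto simp: abs_eq_iff)
qed

lemma sperm_inverse: assumes sp: "signed_perm n S" shows "signed_perm n (inv_into (SI n) S)"
proof -
  have b: "bij_betw S (SI n) (SI n)" using sp by (simp add: signed_perm_def)
  have "bij_betw (inv_into (SI n) S) (SI n) (SI n)" using bij_betw_inv_into[OF b] .
  moreover have "inv_into (SI n) S (-k) = - inv_into (SI n) S k" if k: "k \<in> SI n" for k
  proof -
    define m where "m = inv_into (SI n) S k"
    have m: "m \<in> SI n" "S m = k" using sperm_inv_in[OF sp k] sperm_inv_right[OF sp k] by (auto simp: m_def)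
    have "S (-m) = -k" using sperm_neg[OF sp m(1)] m(2) by simp
    hence "inv_into (SI n) S (-k) = -m" using sperm_inv_left[OF sp SI_neg[OF m(1)]] by simp
    thus ?thesis by (simp add: m_def)
  qed
  ultimately show ?thesis by (simp add: signed_perm_def)
qed

lemma sperm_abs: assumes sp: "signed_perm n P" and b: "b \<in> SI n"
  shows "P \<bar>b\<bar> = sgn b * P b"
proof (cases "b > 0")
  case True thus ?thesis by simp
next
  case False hence "b < 0" using b by (auto simp: SI_def)
  thus ?thesis using sperm_neg[OF sp b] by simp
qed

definition coord_perm :: "nat \<Rightarrow> (int \<Rightarrow> int) \<Rightarrow> (nat \<Rightarrow> real) \<Rightarrow> (nat \<Rightarrow> real)" where
  "coord_perm n P x = (\<lambda>i. if 1 \<le> i \<and> i \<le> n then of_int (sgn (P (int i))) * x (nat \<bar>P (int i)\<bar>) else 0)"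

lemma coord_perm_cube: assumes sp: "signed_perm n P" and x: "x \<in> cube n" shows "coord_perm n P x \<in> cube n"
proof -
  have "-1/4 \<le> coord_perm n P x i \<and> coord_perm n P x i \<le> 1/4" if i: "1 \<le> i" "i \<le> n" for i
  proof -
    have k: "P (int i) \<in> SI n" using sperm_in[OF sp] SI_int i by auto
    have l: "nat \<bar>P (int i)\<bar> \<in> {1..n}" using SI_nat[OF k] .
    have b: "-1/4 \<le> x (nat \<bar>P (int i)\<bar>)" "x (nat \<bar>P (int i)\<bar>) \<le> 1/4" using x l by (auto simp: cube_def)
    have "sgn (P (int i)) = 1 \<or> sgn (P (int i)) = -1" using SI_sgn[OF k] .
    thus ?thesis using b i by (auto simp: coord_perm_def)
  qed
  thus ?thesis by (auto simp: cube_def coord_perm_def)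
qed

lemma coord_perm_facet: assumes sp: "signed_perm n P" and b: "b \<in> SI n" and x: "x \<in> facet n (P b)"
  shows "coord_perm n P x \<in> facet n b"
proof -
  have xc: "x \<in> cube n" using x by (simp add: facet_def)
  have Pb: "P b \<in> SI n" using sperm_in[OF sp b] .
  have xv: "x (nat \<bar>P b\<bar>) = of_int (sgn (P b)) / 4" using x by (simp add: facet_def)
  have nb: "nat \<bar>b\<bar> \<in> {1..n}" using SI_nat[OF b] .
  have "coord_perm n P x (nat \<bar>b\<bar>) = of_int (sgn (P (int (nat \<bar>b\<bar>)))) * x (nat \<bar>P (int (nat \<bar>b\<bar>))\<bar>)"
    using nb by (simp add: coord_perm_def)
  also have "\<dots> = of_int (sgn (sgn b * P b)) * x (nat \<bar>sgn b * P b\<bar>)" using sperm_abs[OF sp b] by simp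
  also have "nat \<bar>sgn b * P b\<bar> = nat \<bar>P b\<bar>" using SI_sgn[OF b] by auto
  also have "sgn (sgn b * P b) = sgn b * sgn (P b)" by (simp add: sgn_mult)
  finally have "coord_perm n P x (nat \<bar>b\<bar>) = of_int (sgn b * sgn (P b)) * (of_int (sgn (P b)) / 4)" using xv by simp
  also have "\<dots> = of_int (sgn b) / 4" using SI_sgn[OF Pb] by auto
  finally show ?thesis using coord_perm_cube[OF sp xc] by (simp add: facet_def)
qed

lemma coord_perm_isometry: assumes sp: "signed_perm n P"
  shows "sqdist n (coord_perm n P x) (coord_perm n P y) = sqdist n x y"
proof -
  define \<pi> where "\<pi> = (\<lambda>i. nat \<bar>P (int i)\<bar>)"
  have into: "\<pi> ` {1..n} \<subseteq> {1..n}" using SI_nat sperm_in[OF sp] SI_int unfolding \<pi>_def by blast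
  have inj: "inj_on \<pi> {1..n}"
  proof (rule inj_onI)
    fix i j assume i: "i \<in> {1..n}" and j: "j \<in> {1..n}" and e: "\<pi> i = \<pi> j"
    hence "\<bar>P (int i)\<bar> = \<bar>P (int j)\<bar>" by (simp add: \<pi>_def nat_abs_eq)
    hence "\<bar>int i\<bar> = \<bar>int j\<bar>" using sperm_abs_eq[OF sp SI_int[OF i] SI_int[OF j]] by simp
    thus "i = j" by simp
  qed
  have bij: "bij_betw \<pi> {1..n} {1..n}"
    unfolding bij_betw_def using inj endo_inj_surj[OF _ into inj] by simp
  have "sqdist n (coord_perm n P x) (coord_perm n P y) = (\<Sum>i\<in>{1..n}. (x (\<pi> i) - y (\<pi> i))^2)"
    unfolding sqdist_def
  proof (rule sum.cong[OF refl])
    fix i assume i: "i \<in> {1..n}"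
    have k: "P (int i) \<in> SI n" using sperm_in[OF sp] SI_int[OF i] .
    have "sgn (P (int i)) = 1 \<or> sgn (P (int i)) = -1" using SI_sgn[OF k] .
    thus "(coord_perm n P x i - coord_perm n P y i)^2 = (x (\<pi> i) - y (\<pi> i))^2"
      using i by (auto simp: coord_perm_def \<pi>_def power2_eq_square algebra_simps)
  qed
  also have "\<dots> = sqdist n x y" unfolding sqdist_def by (rule sum.reindex_bij_betw[OF bij])
  finally show ?thesis .
qed

lemma coord_perm_inverse:
  assumes P: "signed_perm n P" and Q: "signed_perm n Q" and QP: "\<And>k. k \<in> SI n \<Longrightarrow> Q (P k) = k"
    and y: "y \<in> cube n"
  shows "coord_perm n P (coord_perm n Q y) = y"
proof
  fix i
  show "coord_perm n P (coord_perm n Q y) i = y i"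
  proof (cases "1 \<le> i \<and> i \<le> n")
    case False
    hence "i = 0 \<or> n < i" by auto
    hence "y i = 0" using y cube_outside by blast
    thus ?thesis using False unfolding coord_perm_def by auto
  next
    case True
    hence i: "i \<in> {1..n}" by auto
    define k where "k = P (int i)"
    have k: "k \<in> SI n" using sperm_in[OF P SI_int[OF i]] by (simp add: k_def)
    have l: "nat \<bar>k\<bar> \<in> {1..n}" using SI_nat[OF k] .
    have Ql: "Q \<bar>k\<bar> = sgn k * int i"
      using sperm_abs[OF Q k] QP[OF SI_int[OF i]] by (simp add: k_def)
    have s: "sgn k = 1 \<or> sgn k = -1" using SI_sgn[OF k] .
    have "coord_perm n Q y (nat \<bar>k\<bar>) = of_int (sgn (sgn k * int i)) * y (nat \<bar>sgn k * int i\<bar>)"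
      using l Ql by (simp add: coord_perm_def)
    also have "\<dots> = of_int (sgn k) * y i" using s True by auto
    finally have "coord_perm n P (coord_perm n Q y) i = of_int (sgn k) * (of_int (sgn k) * y i)"
      using True by (simp add: coord_perm_def k_def)
    also have "\<dots> = y i" using s by auto
    finally show ?thesis .
  qed
qed

subsection \<open>Rigidity of facet isometries\<close>

text \<open>Dually to facet_isometry_coordinate, each free coordinate of the image of a facet
  isometry onto a facet is +-a free coordinate of the source (apply it to the inverse).\<close>

lemma facet_isometry_coordinate_inv:
  assumes a: "a \<in> SI n" and b: "b \<in> SI n"
    and onto: "f ` facet n a = facet n b"
    and iso: "\<forall>x\<in>facet n a. \<forall>y\<in>facet n a. sqdist n (f x) (f y) = sqdist n x y"
    and i': "i' \<in> {1..n}" "i' \<noteq> nat \<bar>b\<bar>"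
  shows "\<exists>i\<in>{1..n}. i \<noteq> nat \<bar>a\<bar> \<and> (\<exists>t\<in>{1,-1::int}. \<forall>x\<in>facet n a. f x i' = of_int t * x i)"
proof -
  have inj: "inj_on f (facet n a)" by (rule isometry_inj[OF iso facet_subset_cube])
  define g where "g = inv_into (facet n a) f"
  have ginto: "\<forall>y\<in>facet n b. g y \<in> facet n a" using onto unfolding g_def by (metis inv_into_into)
  have gf: "\<forall>y\<in>facet n b. f (g y) = y" using onto unfolding g_def by (metis f_inv_into_f)
  have giso: "\<forall>y\<in>facet n b. \<forall>z\<in>facet n b. sqdist n (g y) (g z) = sqdist n y z"
    using iso ginto gf by metis
  obtain i t where it: "i \<in> {1..n}" "i \<noteq> nat \<bar>a\<bar>" "t \<in> {1,-1::int}"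
    and r: "\<forall>y\<in>facet n b. y i' = of_int t * g y i"
    using facet_isometry_coordinate[OF b a ginto giso i'] by blast
  have "\<forall>x\<in>facet n a. f x i' = of_int t * x i"
  proof
    fix x assume x: "x \<in> facet n a"
    have fx: "f x \<in> facet n b" using onto x by blast
    have "g (f x) = x" unfolding g_def using inv_into_f_f[OF inj x] .
    thus "f x i' = of_int t * x i" using r fx by metis
  qed
  thus ?thesis using it by blast
qed

text \<open>If two maps on F(j) have i'-th image coordinates t1 x_i1 and t2 x_i2 and carry the ridge
  F(j, t1 i1) onto the same set, then i1 = i2 and t1 = t2: compare both maps at the point of
  that ridge whose remaining coordinates vanish.\<close>

lemma ridge_coordinate_match:
  assumes j: "j \<in> SI n"
    and i1: "i1 \<in> {1..n}" "i1 \<noteq> nat \<bar>j\<bar>" "t1 \<in> {1,-1::int}"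
    and i2: "i2 \<noteq> nat \<bar>j\<bar>" "t2 \<in> {1,-1::int}"
    and r1: "\<forall>x\<in>facet n j. ga x i' = of_int t1 * x i1"
    and r2: "\<forall>x\<in>facet n j. gb x i' = of_int t2 * x i2"
    and ridge: "ga ` face2 n j (t1 * int i1) = gb ` face2 n j (t1 * int i1)"
  shows "i2 = i1 \<and> t2 = t1"
proof -
  define k where "k = t1 * int i1"
  have kp: "nat \<bar>k\<bar> = i1" "sgn k = t1" using SI_mk[OF i1(1) i1(3)] by (auto simp: k_def)
  define z where "z = (\<lambda>l. if l = nat \<bar>j\<bar> then of_int (sgn j) / 4 else if l = i1 then of_int t1 / 4 else (0::real))"
  have t14: "(of_int t1 / 4 :: real) = 1/4 \<or> (of_int t1 / 4 :: real) = -1/4" using i1(3) by auto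
  have zc: "z \<in> cube n"
  proof (rule corner_in_cube)
    fix l show "z l = 0 \<or> z l = 1/4 \<or> z l = -1/4" using sgn_quarter[OF j] t14 by (simp add: z_def)
  next
    fix l assume "l = 0 \<or> n < l" thus "z l = 0" using SI_nat[OF j] i1(1) by (auto simp: z_def)
  qed
  have zf: "z \<in> face2 n j k" using zc i1(2) kp by (simp add: face2_def facet_def z_def)
  have "gb z \<in> ga ` face2 n j k" using ridge zf unfolding k_def by blast
  then obtain w where w: "w \<in> face2 n j k" "gb z = ga w" by blast
  have "ga w i' = of_int t1 * w i1" using r1 w(1) by (simp add: face2_def)
  also have "w i1 = of_int t1 / 4" using w(1) kp by (simp add: face2_def facet_def)
  finally have "gb z i' = of_int t1 * (of_int t1 / 4)" using w(2) by simp
  hence e: "of_int t2 * z i2 = (1/4::real)" using r2 zf i1(3) by (auto simp: face2_def)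
  have ii: "i2 = i1"
  proof (rule ccontr)
    assume "i2 \<noteq> i1" hence "z i2 = 0" using i2(1) by (simp add: z_def)
    thus False using e by simp
  qed
  hence "of_int t2 * (of_int t1 / 4) = (1/4::real)" using e i1(2) by (simp add: z_def)
  hence "t2 = t1" using i1(3) i2(2) by auto
  thus ?thesis using ii by simp
qed

text \<open>Two isometries of F(j) onto the same facet that agree on every ridge F(j,k) as maps of
  sets coincide: each image coordinate is +-x_i, and evaluating at a vertex of a ridge pins
  down both the index i and the sign.\<close>

lemma facet_isometry_rigid:
  assumes j: "j \<in> SI n" and b: "b \<in> SI n"
    and on1: "ga ` facet n j = facet n b"
    and iso1: "\<forall>x\<in>facet n j. \<forall>y\<in>facet n j. sqdist n (ga x) (ga y) = sqdist n x y"
    and on2: "gb ` facet n j = facet n b"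
    and iso2: "\<forall>x\<in>facet n j. \<forall>y\<in>facet n j. sqdist n (gb x) (gb y) = sqdist n x y"
    and fc: "\<forall>k\<in>SI n. \<bar>k\<bar> \<noteq> \<bar>j\<bar> \<longrightarrow> ga ` face2 n j k = gb ` face2 n j k"
    and x: "x \<in> facet n j"
  shows "ga x = gb x"
proof
  fix i'
  have g1x: "ga x \<in> facet n b" and g2x: "gb x \<in> facet n b" using on1 on2 x by blast+
  show "ga x i' = gb x i'"
  proof (cases "i' \<in> {1..n} \<and> i' \<noteq> nat \<bar>b\<bar>")
    case False
    then consider "i' = nat \<bar>b\<bar>" | "i' = 0 \<or> n < i'" by fastforce
    thus ?thesis
    proof cases
      case 1 thus ?thesis using g1x g2x by (simp add: facet_def)
    next
      case 2
      have "ga x \<in> cube n" "gb x \<in> cube n" using g1x g2x facet_subset_cube by blast+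
      thus ?thesis using 2 cube_outside by metis
    qed
  next
    case True
    obtain i1 t1 where i1: "i1 \<in> {1..n}" "i1 \<noteq> nat \<bar>j\<bar>" "t1 \<in> {1,-1::int}"
      and r1: "\<forall>x\<in>facet n j. ga x i' = of_int t1 * x i1"
      using facet_isometry_coordinate_inv[OF j b on1 iso1, of i'] True by blast
    obtain i2 t2 where i2: "i2 \<in> {1..n}" "i2 \<noteq> nat \<bar>j\<bar>" "t2 \<in> {1,-1::int}"
      and r2: "\<forall>x\<in>facet n j. gb x i' = of_int t2 * x i2"
      using facet_isometry_coordinate_inv[OF j b on2 iso2, of i'] True by blast
    have k: "t1 * int i1 \<in> SI n" "\<bar>t1 * int i1\<bar> \<noteq> \<bar>j\<bar>"
      using SI_mk[OF i1(1) i1(3)] i1(2) by (auto simp: nat_abs_eq[symmetric])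
    have "i2 = i1 \<and> t2 = t1"
      by (rule ridge_coordinate_match[where ga = ga and gb = gb, OF j i1 i2(2,3) r1 r2]) (use fc k in blast)
    thus ?thesis using r1 r2 x by simp
  qed
qed

subsection \<open>Symmetries of the cube and the signed permutations they induce\<close>

definition induces_perm :: "nat \<Rightarrow> ((nat \<Rightarrow> real) \<Rightarrow> (nat \<Rightarrow> real)) \<Rightarrow> (int \<Rightarrow> int) \<Rightarrow> bool" where
  "induces_perm n h S \<longleftrightarrow> signed_perm n S \<and> (\<forall>k\<in>SI n. h ` facet n k = facet n (S k))"

lemma symmetry_sqdist:
  "cube_symmetry n h \<Longrightarrow> \<forall>x\<in>cube n. \<forall>y\<in>cube n. sqdist n (h x) (h y) = sqdist n x y"
  by (simp add: cube_symmetry_def edist_eq_iff)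

lemma symmetry_inj: "cube_symmetry n h \<Longrightarrow> inj_on h (cube n)"
  using isometry_inj[OF symmetry_sqdist] by blast

text \<open>A symmetry maps each pair of opposite facets onto a pair of opposite facets, because each
  coordinate of the source is plus or minus a coordinate of the image.\<close>

lemma symmetry_facet_image:
  assumes hs: "cube_symmetry n h" and k: "k \<in> SI n"
  shows "\<exists>k'\<in>SI n. h ` facet n k = facet n k' \<and> h ` facet n (-k) = facet n (-k')"
proof -
  have hcube: "h ` cube n = cube n" using hs by (simp add: cube_symmetry_def)
  have hinto: "\<forall>x\<in>cube n. h x \<in> cube n" using hcube by blast
  obtain i' t where i': "i' \<in> {1..n}" and t: "t \<in> {1,-1::int}"
    and rel: "\<forall>x\<in>cube n. x (nat \<bar>k\<bar>) = of_int t * h x i'"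
    using cube_isometry_coordinate[OF hinto symmetry_sqdist[OF hs] SI_nat[OF k]] by blast
  define k' where "k' = sgn k * t * int i'"
  have st: "sgn k * t \<in> {1,-1}" using SI_sgn[OF k] t by auto
  have k'SI: "k' \<in> SI n" using SI_mk[OF i' st] by (simp add: k'_def)
  have cf: "\<forall>x\<in>cube n. (x \<in> facet n k \<longleftrightarrow> h x \<in> facet n k') \<and>
                       (x \<in> facet n (-k) \<longleftrightarrow> h x \<in> facet n (-k'))"
    unfolding k'_def using coord_relation_facet[OF t k i'] rel hinto by blast
  have "h ` (cube n \<inter> facet n k) = cube n \<inter> facet n k'"
    by (rule image_restrict[OF hcube]) (use cf in blast)
  moreover have "h ` (cube n \<inter> facet n (-k)) = cube n \<inter> facet n (-k')"
    by (rule image_restrict[OF hcube]) (use cf in blast)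
  ultimately show ?thesis using k'SI by (auto simp: Int_absorb1[OF facet_subset_cube])
qed

lemma symmetry_induces_perm:
  assumes hs: "cube_symmetry n h"
  shows "\<exists>S. induces_perm n h S"
proof -
  define S where "S = (\<lambda>k. SOME k'. k' \<in> SI n \<and> h ` facet n k = facet n k')"
  have S1: "S k \<in> SI n \<and> h ` facet n k = facet n (S k)" if "k \<in> SI n" for k
  proof -
    have "\<exists>k'. k' \<in> SI n \<and> h ` facet n k = facet n k'"
      using symmetry_facet_image[OF hs that] by blast
    thus ?thesis unfolding S_def by (rule someI_ex)
  qed
  have Sneg: "S (-k) = - S k" if k: "k \<in> SI n" for k
  proof -
    obtain k' where k': "k' \<in> SI n" "h ` facet n k = facet n k'" "h ` facet n (-k) = facet n (-k')"
      using symmetry_facet_image[OF hs k] by blast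
    have "S k = k'" using facet_inj[of "S k" n k'] S1[OF k] k' by simp
    moreover have "S (-k) = -k'"
      using facet_inj[of "S (-k)" n "-k'"] S1[OF SI_neg[OF k]] SI_neg[OF k'(1)] k'(3) by simp
    ultimately show ?thesis by simp
  qed
  have Sinj: "inj_on S (SI n)"
  proof (rule inj_onI)
    fix a b assume a: "a \<in> SI n" and b: "b \<in> SI n" and e: "S a = S b"
    hence "h ` facet n a = h ` facet n b" using S1 by metis
    hence "facet n a = facet n b"
      using inj_on_image_eq_iff[OF symmetry_inj[OF hs] facet_subset_cube facet_subset_cube] by blast
    thus "a = b" using facet_inj a b by blast
  qed
  have "S ` SI n = SI n" by (rule endo_inj_surj[OF finite_SI _ Sinj]) (use S1 in blast)
  hence "signed_perm n S" unfolding signed_perm_def bij_betw_def using Sinj Sneg by blast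
  thus ?thesis using S1 unfolding induces_perm_def by blast
qed

lemma perm_induces_symmetry:
  assumes Ssp: "signed_perm n S"
  defines "h \<equiv> coord_perm n (inv_into (SI n) S)"
  shows "cube_symmetry n h" and "induces_perm n h S"
proof -
  define T where "T = inv_into (SI n) S"
  have Tsp: "signed_perm n T" using sperm_inverse[OF Ssp] by (simp add: T_def)
  have ST: "S (T k) = k" if "k \<in> SI n" for k using sperm_inv_right[OF Ssp that] by (simp add: T_def)
  have TS: "T (S k) = k" if "k \<in> SI n" for k using sperm_inv_left[OF Ssp that] by (simp add: T_def)
  have hinv: "h (coord_perm n S y) = y" if "y \<in> cube n" for y
    unfolding h_def T_def[symmetric] by (rule coord_perm_inverse[OF Tsp Ssp ST that])
  have "h ` cube n = cube n"
  proof
    show "h ` cube n \<subseteq> cube n" using coord_perm_cube[OF Tsp] by (auto simp: h_def T_def)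
    show "cube n \<subseteq> h ` cube n" using hinv coord_perm_cube[OF Ssp] by (metis image_eqI subsetI)
  qed
  thus "cube_symmetry n h"
    unfolding cube_symmetry_def edist_eq_iff h_def using coord_perm_isometry[OF Tsp] by (simp add: T_def)
  have "h ` facet n a = facet n (S a)" if a: "a \<in> SI n" for a
  proof
    show "h ` facet n a \<subseteq> facet n (S a)"
      using coord_perm_facet[OF Tsp sperm_in[OF Ssp a]] TS[OF a] by (auto simp: h_def T_def)
    show "facet n (S a) \<subseteq> h ` facet n a"
    proof
      fix y assume y: "y \<in> facet n (S a)"
      have "coord_perm n S y \<in> facet n a" by (rule coord_perm_facet[OF Ssp a y])
      moreover have "h (coord_perm n S y) = y" using hinv y facet_subset_cube by blast
      ultimately show "y \<in> h ` facet n a" by (metis imageI)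
    qed
  qed
  thus "induces_perm n h S" using Ssp by (simp add: induces_perm_def)
qed

lemma induces_perm_face2:
  assumes "induces_perm n h S" "inj_on h (cube n)" "a \<in> SI n" "c \<in> SI n"
  shows "h ` face2 n a c = face2 n (S a) (S c)"
  using assms image_face2 by (simp add: induces_perm_def)

subsection \<open>Equivalence as intertwining\<close>

definition intertwines ::
  "nat \<Rightarrow> ((nat \<Rightarrow> real) \<Rightarrow> (nat \<Rightarrow> real)) \<Rightarrow> (int \<Rightarrow> int)
       \<Rightarrow> (int \<Rightarrow> (nat \<Rightarrow> real) \<Rightarrow> (nat \<Rightarrow> real)) \<Rightarrow> (int \<Rightarrow> (nat \<Rightarrow> real) \<Rightarrow> (nat \<Rightarrow> real)) \<Rightarrow> bool" where
  "intertwines n h S \<tau> \<tau>' \<longleftrightarrow> (\<forall>j\<in>SI n. \<forall>p\<in>facet n j. h (\<tau> j p) = \<tau>' (S j) (h p))"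

lemma equivalence_iff_intertwines:
  assumes hs: "cube_symmetry n h" and hS: "induces_perm n h S"
    and reg: "regular_fps n \<omega> \<tau>" and reg': "regular_fps n \<omega>' \<tau>'"
  shows "(\<forall>j\<in>SI n. \<forall>j'\<in>SI n. h ` facet n j = facet n j' \<longrightarrow>
            (\<forall>p\<in>facet n j. \<tau> j p = inv_into (cube n) h (\<tau>' j' (h p))))
         \<longleftrightarrow> intertwines n h S \<tau> \<tau>'"
proof -
  have hcube: "h ` cube n = cube n" using hs by (simp add: cube_symmetry_def)
  have Sf: "S j \<in> SI n" "h ` facet n j = facet n (S j)" if "j \<in> SI n" for j
    using hS that sperm_in by (auto simp: induces_perm_def)
  have target: "h ` facet n j = facet n j' \<longleftrightarrow> j' = S j" if "j \<in> SI n" "j' \<in> SI n" for j j'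
    using Sf[OF that(1)] facet_inj[OF that(2) Sf(1)[OF that(1)]] by metis
  have pointwise: "\<tau> j p = inv_into (cube n) h (\<tau>' (S j) (h p)) \<longleftrightarrow> h (\<tau> j p) = \<tau>' (S j) (h p)"
    if j: "j \<in> SI n" and p: "p \<in> facet n j" for j p
  proof -
    have "\<tau> j p \<in> cube n" using regular_facts(4)[OF reg j] p facet_subset_cube by blast
    moreover have "h p \<in> facet n (S j)" using Sf[OF j] p by blast
    hence "\<tau>' (S j) (h p) \<in> h ` cube n"
      using regular_facts(4)[OF reg' Sf(1)[OF j]] facet_subset_cube hcube by blast
    ultimately show ?thesis using symmetry_inj[OF hs] by (metis f_inv_into_f inv_into_f_f)
  qed
  show ?thesis unfolding intertwines_def using target pointwise Sf(1) by metis
qed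

subsection \<open>Intertwining symmetries and shuffled conjugacy\<close>

definition shuffled_conjugate ::
  "nat \<Rightarrow> (int \<Rightarrow> int) \<Rightarrow> (int \<Rightarrow> (nat \<Rightarrow> real) \<Rightarrow> (nat \<Rightarrow> real))
       \<Rightarrow> (int \<Rightarrow> int) \<Rightarrow> (int \<Rightarrow> (nat \<Rightarrow> real) \<Rightarrow> (nat \<Rightarrow> real)) \<Rightarrow> (int \<Rightarrow> int) \<Rightarrow> bool" where
  "shuffled_conjugate n \<omega> \<tau> \<omega>' \<tau>' S \<longleftrightarrow> signed_perm n S \<and>
     (\<forall>k\<in>SI n. \<omega> k = inv_into (SI n) S (\<omega>' (S k))) \<and>
     (\<forall>j\<in>SI n. \<forall>k\<in>SI n. sigt n \<omega> \<tau> j k = inv_into (SI n) S (sigt n \<omega>' \<tau>' (S j) (S k)))"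

lemma sigt_in_SI:
  assumes reg: "regular_fps n \<omega> \<tau>" and j: "j \<in> SI n" and k: "k \<in> SI n"
  shows "sigt n \<omega> \<tau> j k \<in> SI n"
proof (cases "\<bar>k\<bar> = \<bar>j\<bar>")
  case True
  hence "k = j \<or> k = -j" by (auto simp: abs_eq_iff)
  thus ?thesis using regular_facts(1)[OF reg j] SI_neg by (auto simp: sigt_def)
qed (use sigt_char[OF reg j k] in blast)

lemma intertwines_omega:
  assumes reg: "regular_fps n \<omega> \<tau>" and reg': "regular_fps n \<omega>' \<tau>'"
    and hinj: "inj_on h (cube n)" and hS: "induces_perm n h S" and it: "intertwines n h S \<tau> \<tau>'"
    and j: "j \<in> SI n"
  shows "S (\<omega> j) = \<omega>' (S j)"
proof -
  note R = regular_facts[OF reg j]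
  have Sf: "S k \<in> SI n" "h ` facet n k = facet n (S k)" if "k \<in> SI n" for k
    using hS that sperm_in by (auto simp: induces_perm_def)
  note R' = regular_facts[OF reg' Sf(1)[OF j]]
  have "facet n (S (\<omega> j)) = h ` \<tau> j ` facet n j" using R(2) Sf[OF R(1)] by simp
  also have "\<dots> = \<tau>' (S j) ` h ` facet n j"
    using it j unfolding intertwines_def image_image by (intro image_cong) auto
  also have "\<dots> = facet n (\<omega>' (S j))" using Sf[OF j] R'(2) by simp
  finally show ?thesis using facet_inj Sf(1)[OF R(1)] R'(1) by blast
qed

text \<open>An intertwining transports the ridge F(j,k) and its image under tau j, so it conjugates
  the associated signed permutations.\<close>

lemma intertwines_sigt:
  assumes reg: "regular_fps n \<omega> \<tau>" and reg': "regular_fps n \<omega>' \<tau>'"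
    and hinj: "inj_on h (cube n)" and hS: "induces_perm n h S" and it: "intertwines n h S \<tau> \<tau>'"
    and j: "j \<in> SI n" and k: "k \<in> SI n"
  shows "S (sigt n \<omega> \<tau> j k) = sigt n \<omega>' \<tau>' (S j) (S k)"
proof -
  have Ssp: "signed_perm n S" using hS by (simp add: induces_perm_def)
  have oj: "\<omega> j \<in> SI n" using regular_facts(1)[OF reg j] .
  have Som: "S (\<omega> j) = \<omega>' (S j)" by (rule intertwines_omega[OF reg reg' hinj hS it j])
  have ne: "- S j \<noteq> S j" using sperm_in[OF Ssp j] by (auto simp: SI_def)
  consider "k = j" | "k = -j" | "\<bar>k\<bar> \<noteq> \<bar>j\<bar>" by (auto simp: abs_eq_iff)
  thus ?thesis
  proof cases
    case 1 thus ?thesis using Som by (simp add: sigt_def)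
  next
    case 2
    have "j \<noteq> -j" using j by (auto simp: SI_def)
    thus ?thesis using 2 Som ne sperm_neg[OF Ssp j] sperm_neg[OF Ssp oj] by (simp add: sigt_def)
  next
    case 3
    have Sjk: "\<bar>S k\<bar> \<noteq> \<bar>S j\<bar>" using sperm_abs_eq[OF Ssp k j] 3 by simp
    define \<sigma> where "\<sigma> = sigt n \<omega> \<tau> j k"
    define \<sigma>' where "\<sigma>' = sigt n \<omega>' \<tau>' (S j) (S k)"
    have \<sigma>: "\<sigma> \<in> SI n" "\<bar>\<sigma>\<bar> \<noteq> \<bar>\<omega> j\<bar>" "\<tau> j ` face2 n j k = face2 n (\<omega> j) \<sigma>"
      using sigt_char[OF reg j k 3] by (simp_all add: \<sigma>_def)
    have \<sigma>': "\<sigma>' \<in> SI n" "\<bar>\<sigma>'\<bar> \<noteq> \<bar>\<omega>' (S j)\<bar>"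
        "\<tau>' (S j) ` face2 n (S j) (S k) = face2 n (\<omega>' (S j)) \<sigma>'"
      using sigt_char[OF reg' sperm_in[OF Ssp j] sperm_in[OF Ssp k] Sjk] by (simp_all add: \<sigma>'_def)
    have "face2 n (\<omega>' (S j)) (S \<sigma>) = h ` \<tau> j ` face2 n j k"
      using induces_perm_face2[OF hS hinj oj \<sigma>(1)] \<sigma>(3) Som by simp
    also have "\<dots> = \<tau>' (S j) ` h ` face2 n j k"
      using it j unfolding intertwines_def image_image by (intro image_cong) (auto simp: face2_def)
    also have "\<dots> = face2 n (\<omega>' (S j)) \<sigma>'"
      using induces_perm_face2[OF hS hinj j k] \<sigma>'(3) by simp
    finally have "face2 n (\<omega>' (S j)) (S \<sigma>) = face2 n (\<omega>' (S j)) \<sigma>'" .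
    moreover have "\<bar>S \<sigma>\<bar> \<noteq> \<bar>\<omega>' (S j)\<bar>" using sperm_abs_eq[OF Ssp \<sigma>(1) oj] \<sigma>(2) Som by simp
    ultimately have "S \<sigma> = \<sigma>'"
      using face2_inj[OF _ sperm_in[OF Ssp \<sigma>(1)] \<sigma>'(1) _ \<sigma>'(2)] regular_facts(1)[OF reg' sperm_in[OF Ssp j]]
      by blast
    thus ?thesis by (simp add: \<sigma>_def \<sigma>'_def)
  qed
qed

lemma intertwines_imp_conjugate:
  assumes reg: "regular_fps n \<omega> \<tau>" and reg': "regular_fps n \<omega>' \<tau>'"
    and hinj: "inj_on h (cube n)" and hS: "induces_perm n h S" and it: "intertwines n h S \<tau> \<tau>'"
  shows "shuffled_conjugate n \<omega> \<tau> \<omega>' \<tau>' S"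
proof -
  have Ssp: "signed_perm n S" using hS by (simp add: induces_perm_def)
  show ?thesis unfolding shuffled_conjugate_def
    using Ssp intertwines_omega[OF reg reg' hinj hS it] intertwines_sigt[OF reg reg' hinj hS it]
      sperm_inv_left[OF Ssp] regular_facts(1)[OF reg] sigt_in_SI[OF reg] by metis
qed

lemma conjugate_apply:
  assumes reg: "regular_fps n \<omega> \<tau>" and reg': "regular_fps n \<omega>' \<tau>'"
    and conj: "shuffled_conjugate n \<omega> \<tau> \<omega>' \<tau>' S" and j: "j \<in> SI n" and k: "k \<in> SI n"
  shows "S (\<omega> j) = \<omega>' (S j)" and "S (sigt n \<omega> \<tau> j k) = sigt n \<omega>' \<tau>' (S j) (S k)"
proof -
  have Ssp: "signed_perm n S" using conj by (simp add: shuffled_conjugate_def)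
  have Sj: "S j \<in> SI n" "S k \<in> SI n" using sperm_in[OF Ssp] j k by auto
  show "S (\<omega> j) = \<omega>' (S j)"
    using conj j sperm_inv_right[OF Ssp regular_facts(1)[OF reg' Sj(1)]]
    by (simp add: shuffled_conjugate_def)
  show "S (sigt n \<omega> \<tau> j k) = sigt n \<omega>' \<tau>' (S j) (S k)"
    using conj j k sperm_inv_right[OF Ssp sigt_in_SI[OF reg' Sj]]
    by (simp add: shuffled_conjugate_def)
qed

lemma conjugate_ridges_agree:
  assumes reg: "regular_fps n \<omega> \<tau>" and reg': "regular_fps n \<omega>' \<tau>'"
    and hinj: "inj_on h (cube n)" and hS: "induces_perm n h S"
    and conj: "shuffled_conjugate n \<omega> \<tau> \<omega>' \<tau>' S"
    and j: "j \<in> SI n" and k: "k \<in> SI n" and jk: "\<bar>k\<bar> \<noteq> \<bar>j\<bar>"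
  shows "h ` \<tau> j ` face2 n j k = \<tau>' (S j) ` h ` face2 n j k"
proof -
  have Ssp: "signed_perm n S" using hS by (simp add: induces_perm_def)
  have Sjk: "\<bar>S k\<bar> \<noteq> \<bar>S j\<bar>" using sperm_abs_eq[OF Ssp k j] jk by simp
  define \<sigma> where "\<sigma> = sigt n \<omega> \<tau> j k"
  have \<sigma>: "\<sigma> \<in> SI n" "\<tau> j ` face2 n j k = face2 n (\<omega> j) \<sigma>"
    using sigt_char[OF reg j k jk] by (simp_all add: \<sigma>_def)
  have \<sigma>': "\<tau>' (S j) ` face2 n (S j) (S k) = face2 n (\<omega>' (S j)) (S \<sigma>)"
    using sigt_char[OF reg' sperm_in[OF Ssp j] sperm_in[OF Ssp k] Sjk] conjugate_apply(2)[OF reg reg' conj j k]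
    by (simp add: \<sigma>_def)
  have "h ` \<tau> j ` face2 n j k = face2 n (S (\<omega> j)) (S \<sigma>)"
    using \<sigma> induces_perm_face2[OF hS hinj regular_facts(1)[OF reg j] \<sigma>(1)] by simp
  also have "\<dots> = \<tau>' (S j) ` h ` face2 n j k"
    using \<sigma>' induces_perm_face2[OF hS hinj j k] conjugate_apply(1)[OF reg reg' conj j k] by simp
  finally show ?thesis .
qed

text \<open>Conversely, shuffled conjugacy implies intertwining: the two isometries h o tau j and
  tau' (S j) o h of F(j) onto F(S (omega j)) agree on all ridges, hence coincide by rigidity.\<close>

lemma conjugate_imp_intertwines:
  assumes reg: "regular_fps n \<omega> \<tau>" and reg': "regular_fps n \<omega>' \<tau>'"
    and hs: "cube_symmetry n h" and hS: "induces_perm n h S"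
    and conj: "shuffled_conjugate n \<omega> \<tau> \<omega>' \<tau>' S"
  shows "intertwines n h S \<tau> \<tau>'"
  unfolding intertwines_def
proof (intro ballI)
  fix j p assume j: "j \<in> SI n" and p: "p \<in> facet n j"
  have hiso: "\<forall>x\<in>cube n. \<forall>y\<in>cube n. sqdist n (h x) (h y) = sqdist n x y" by (rule symmetry_sqdist[OF hs])
  have Sf: "S k \<in> SI n" "h ` facet n k = facet n (S k)" if "k \<in> SI n" for k
    using hS that sperm_in by (auto simp: induces_perm_def)
  note R = regular_facts[OF reg j] and R' = regular_facts[OF reg' Sf(1)[OF j]]
  have hp: "\<forall>x\<in>facet n j. h x \<in> facet n (S j)" using Sf(2)[OF j] by blast
  show "h (\<tau> j p) = \<tau>' (S j) (h p)"
  proof (rule facet_isometry_rigid[where ga = "\<lambda>p. h (\<tau> j p)" and gb = "\<lambda>p. \<tau>' (S j) (h p)",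
        OF j Sf(1)[OF R(1)] _ _ _ _ _ p])
    show "(\<lambda>p. h (\<tau> j p)) ` facet n j = facet n (S (\<omega> j))"
      using R(2) Sf(2)[OF R(1)] by (simp add: image_image[symmetric])
    show "\<forall>x\<in>facet n j. \<forall>y\<in>facet n j. sqdist n (h (\<tau> j x)) (h (\<tau> j y)) = sqdist n x y"
      using R(3) R(4) hiso facet_subset_cube by (metis subsetD)
    show "(\<lambda>p. \<tau>' (S j) (h p)) ` facet n j = facet n (S (\<omega> j))"
      using Sf(2)[OF j] R'(2) conjugate_apply(1)[OF reg reg' conj j j] by (simp add: image_image[symmetric])
    show "\<forall>x\<in>facet n j. \<forall>y\<in>facet n j. sqdist n (\<tau>' (S j) (h x)) (\<tau>' (S j) (h y)) = sqdist n x y"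
      using R'(3) hp hiso facet_subset_cube by (metis subsetD)
    show "\<forall>k\<in>SI n. \<bar>k\<bar> \<noteq> \<bar>j\<bar> \<longrightarrow>
            (\<lambda>p. h (\<tau> j p)) ` face2 n j k = (\<lambda>p. \<tau>' (S j) (h p)) ` face2 n j k"
      using conjugate_ridges_agree[OF reg reg' symmetry_inj[OF hs] hS conj j]
      by (simp add: image_image)
  qed
qed

theorem mainTheorem2:
  fixes n :: nat
    and \<omega> \<omega>' :: "int \<Rightarrow> int"
    and \<tau> \<tau>' :: "int \<Rightarrow> (nat \<Rightarrow> real) \<Rightarrow> (nat \<Rightarrow> real)"
  assumes "1 \<le> n"
    and reg: "regular_fps n \<omega> \<tau>"
    and reg': "regular_fps n \<omega>' \<tau>'"
  shows "fps_equivalent n \<omega> \<tau> \<omega>' \<tau>' \<longleftrightarrow>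
    (\<exists>S. signed_perm n S \<and>
       (\<forall>k\<in>SI n. \<omega> k = inv_into (SI n) S (\<omega>' (S k))) \<and>
       (\<forall>j\<in>SI n. \<forall>k\<in>SI n.
          sigt n \<omega> \<tau> j k = inv_into (SI n) S (sigt n \<omega>' \<tau>' (S j) (S k))))"
  unfolding shuffled_conjugate_def[symmetric]
proof
  assume "fps_equivalent n \<omega> \<tau> \<omega>' \<tau>'"
  then obtain h where hs: "cube_symmetry n h"
    and eqv: "\<forall>j\<in>SI n. \<forall>j'\<in>SI n. h ` facet n j = facet n j' \<longrightarrow>
               (\<forall>p\<in>facet n j. \<tau> j p = inv_into (cube n) h (\<tau>' j' (h p)))"
    unfolding fps_equivalent_def by blast
  obtain S where hS: "induces_perm n h S" using symmetry_induces_perm[OF hs] by blast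
  have "intertwines n h S \<tau> \<tau>'" using eqv equivalence_iff_intertwines[OF hs hS reg reg'] by blast
  hence "shuffled_conjugate n \<omega> \<tau> \<omega>' \<tau>' S"
    by (rule intertwines_imp_conjugate[OF reg reg' symmetry_inj[OF hs] hS])
  thus "\<exists>S. shuffled_conjugate n \<omega> \<tau> \<omega>' \<tau>' S" by blast
next
  assume "\<exists>S. shuffled_conjugate n \<omega> \<tau> \<omega>' \<tau>' S"
  then obtain S where conj: "shuffled_conjugate n \<omega> \<tau> \<omega>' \<tau>' S" ..
  define h where "h = coord_perm n (inv_into (SI n) S)"
  have Ssp: "signed_perm n S" using conj by (simp add: shuffled_conjugate_def)
  have hs: "cube_symmetry n h" and hS: "induces_perm n h S"
    using perm_induces_symmetry[OF Ssp] by (simp_all add: h_def)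
  have "intertwines n h S \<tau> \<tau>'" by (rule conjugate_imp_intertwines[OF reg reg' hs hS conj])
  thus "fps_equivalent n \<omega> \<tau> \<omega>' \<tau>'"
    unfolding fps_equivalent_def using equivalence_iff_intertwines[OF hs hS reg reg'] hs by blast
qed

end
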